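(* Let $q$ be a prime power, $n\ge1$, and $d,m$ positive integers. There exists an equidistant linear code $\mathcal{U}\subseteq\mathbb{P}_q(n)$ with constant distance $2d$ and $|\mathcal{U}|=2^m$ if and only if there exists a $d$-intersecting family $\mathcal{F}\subseteq\mathbb{G}_q(n,2d)$ with $|\mathcal{F}|=2^m-1$.
   Context: $\mathbb{P}_q(n)$ denotes the set of all subspaces of $\mathbb{F}_q^n$ and $\mathbb{G}_q(n,k)$ the set of $k$-dimensional subspaces. For subspaces $X,Y$ the subspace distance is $d_S(X,Y)=\dim X+\dim Y-2\dim(X\cap Y)$. A linear code in $\mathbb{P}_q(n)$ is a subset $\mathcal{U}\subseteq\mathbb{P}_q(n)$ with $\{0\}\in\mathcal{U}$ for which there exists a map $\boxplus:\mathcal{U}\times\mathcal{U}\to\mathcal{U}$ such that (i) $(\mathcal{U},\boxplus)$ is an abelian group; (ii) its identity element is $\{0\}$; (iii) $X\boxplus X=\{0\}$ for all $X\in\mathcal{U}$; (iv) $d_S(Y_1\boxplus X,Y_2\boxplus X)=d_S(Y_1,Y_2)$ for all $Y_1,Y_2,X\in\mathcal{U}$. It is equidistant with constant distance $r$ if $d_S(X,Y)=r$ for all distinct $X,Y\in\mathcal{U}$. A family $\mathcal{F}$ of subspaces is $\lambda$-intersecting if $\dim(X\cap Y)=\lambda$ for all distinct $X,Y\in\mathcal{F}$. *)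

theory Defs
  imports "HOL-Analysis.Cartesian_Space" "HOL-Algebra.Group"
begin

text \<open>The ambient space F_q^n is modelled as the type 'a ^ 'n, where 'a is a finite
field (hence of prime-power order q) and 'n a finite type with CARD('n) = n >= 1.\<close>

definition Psub :: "('a::field ^ 'n) set set" where
  "Psub = {X. vec.subspace X}"

definition Gsub :: "nat \<Rightarrow> ('a::field ^ 'n) set set" where
  "Gsub k = {X. vec.subspace X \<and> vec.dim X = k}"

definition dS :: "('a::field ^ 'n) set \<Rightarrow> ('a ^ 'n) set \<Rightarrow> nat" where
  "dS X Y = vec.dim X + vec.dim Y - 2 * vec.dim (X \<inter> Y)"

definition linear_code :: "('a::field ^ 'n) set set \<Rightarrow> bool" where
  "linear_code U \<longleftrightarrow> U \<subseteq> Psub \<and> {0} \<in> U \<and>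
     (\<exists>f. (\<forall>X\<in>U. \<forall>Y\<in>U. f X Y \<in> U) \<and>
          comm_group \<lparr>carrier = U, mult = f, one = {0}\<rparr> \<and>
          (\<forall>X\<in>U. f X X = {0}) \<and>
          (\<forall>Y1\<in>U. \<forall>Y2\<in>U. \<forall>X\<in>U. dS (f Y1 X) (f Y2 X) = dS Y1 Y2))"

definition equidistant :: "nat \<Rightarrow> ('a::field ^ 'n) set set \<Rightarrow> bool" where
  "equidistant r U \<longleftrightarrow> (\<forall>X\<in>U. \<forall>Y\<in>U. X \<noteq> Y \<longrightarrow> dS X Y = r)"

definition intersecting :: "nat \<Rightarrow> ('a::field ^ 'n) set set \<Rightarrow> bool" where
  "intersecting l F \<longleftrightarrow> (\<forall>X\<in>F. \<forall>Y\<in>F. X \<noteq> Y \<longrightarrow> vec.dim (X \<inter> Y) = l)"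

end

theory Submission
  imports Defs
begin

text \<open>Deleting the zero space from an equidistant code of distance 2d leaves subspaces of
dimension 2d that pairwise meet in dimension d, and conversely. The group law is then
irrelevant for the isometry axiom: any translation is injective, so it maps distinct codewords
to distinct codewords, which again are at distance 2d. A code of size 2^m therefore always
carries a suitable group, namely the Boolean group of subsets of an m-set transported along a
bijection that sends the zero space to the empty set.\<close>

lemma dS_zero_right: "vec.subspace X \<Longrightarrow> dS X {0} = vec.dim X"
  using vec.subspace_0 by (fastforce simp: dS_def Int_absorb1)

lemma dS_zero_left: "vec.subspace X \<Longrightarrow> dS {0} X = vec.dim X"
  using vec.subspace_0 by (fastforce simp: dS_def Int_absorb2)

lemma dS_self: "dS X X = 0"
  by (simp add: dS_def)

lemma dS_eq_dim_iff_dim_Int: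
  assumes "vec.dim X = 2 * d" "vec.dim Y = 2 * d"
  shows "dS X Y = 2 * d \<longleftrightarrow> vec.dim (X \<inter> Y) = d"
proof -
  have "vec.dim (X \<inter> Y) \<le> vec.dim X" by (rule vec.dim_subset) auto
  then show ?thesis using assms by (auto simp: dS_def)
qed

lemma equidistant_insert_zero_iff:
  assumes "F \<subseteq> Psub" "{0} \<notin> F"
  shows "equidistant (2 * d) (insert {0} F) \<longleftrightarrow> F \<subseteq> Gsub (2 * d) \<and> intersecting d F"
proof
  assume eq: "equidistant (2 * d) (insert {0} F)"
  have dim: "vec.dim X = 2 * d" if "X \<in> F" for X
    using that assms eq dS_zero_right[of X] by (force simp: equidistant_def Psub_def)
  then have "F \<subseteq> Gsub (2 * d)" using assms(1) by (auto simp: Gsub_def Psub_def)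
  moreover have "intersecting d F"
    unfolding intersecting_def
  proof (intro ballI impI)
    fix X Y assume "X \<in> F" "Y \<in> F" "X \<noteq> Y"
    then have "dS X Y = 2 * d" using eq by (simp add: equidistant_def)
    then show "vec.dim (X \<inter> Y) = d"
      using dS_eq_dim_iff_dim_Int dim \<open>X \<in> F\<close> \<open>Y \<in> F\<close> by blast
  qed
  ultimately show "F \<subseteq> Gsub (2 * d) \<and> intersecting d F" ..
next
  assume F: "F \<subseteq> Gsub (2 * d) \<and> intersecting d F"
  then have dim: "vec.subspace X \<and> vec.dim X = 2 * d" if "X \<in> F" for X
    using that by (auto simp: Gsub_def)
  have int: "vec.dim (X \<inter> Y) = d" if "X \<in> F" "Y \<in> F" "X \<noteq> Y" for X Y
    using that F by (auto simp: intersecting_def)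
  show "equidistant (2 * d) (insert {0} F)"
    unfolding equidistant_def
  proof (intro ballI impI)
    fix X Y assume "X \<in> insert {0} F" "Y \<in> insert {0} F" "X \<noteq> Y"
    then consider "X = {0}" "Y \<in> F" | "Y = {0}" "X \<in> F" | "X \<in> F" "Y \<in> F" by auto
    then show "dS X Y = 2 * d"
    proof cases
      case 1 then show ?thesis using dim[of Y] dS_zero_left[of Y] by simp
    next
      case 2 then show ?thesis using dim[of X] dS_zero_right[of X] by simp
    next
      case 3 then show ?thesis using dim int \<open>X \<noteq> Y\<close> dS_eq_dim_iff_dim_Int by blast
    qed
  qed
qed

lemma comm_group_Pow_sym_diff:
  "comm_group \<lparr>carrier = Pow A, mult = \<lambda>X Y. sym_diff X Y, one = {}\<rparr>"
  by (rule comm_groupI) auto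

lemma bij_betw_sym_diff_Pow:
  assumes "C \<subseteq> A"
  shows "bij_betw (\<lambda>X. sym_diff X C) (Pow A) (Pow A)"
  by (rule bij_betw_byWitness[where f' = "\<lambda>X. sym_diff X C"]) (use assms in auto)

lemma comm_group_transfer:
  fixes G (structure)
  assumes "comm_group G" and g: "bij_betw g U (carrier G)"
  defines "h \<equiv> inv_into U g"
  shows "comm_group \<lparr>carrier = U, mult = \<lambda>x y. h (g x \<otimes> g y), one = h \<one>\<rparr>"
proof -
  interpret comm_group G by fact
  have h_in: "h a \<in> U" and g_h: "g (h a) = a" if "a \<in> carrier G" for a
    using that g bij_betw_inv_into_right[OF g] by (auto simp: h_def bij_betw_def inv_into_into)
  have h_g: "h (g x) = x" and g_in: "g x \<in> carrier G" if "x \<in> U" for x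
    using that g by (auto simp: h_def bij_betw_def)
  show ?thesis
  proof (rule comm_groupI, simp_all)
    fix x y z assume "x \<in> U" "y \<in> U" "z \<in> U"
    then show "h (g (h (g x \<otimes> g y)) \<otimes> g z) = h (g x \<otimes> g (h (g y \<otimes> g z)))"
      by (simp add: g_h g_in m_assoc)
    show "h (g x \<otimes> g y) = h (g y \<otimes> g x)"
      using \<open>x \<in> U\<close> \<open>y \<in> U\<close> by (simp add: g_in m_comm)
  next
    fix x assume "x \<in> U"
    then show "h (g (h \<one>) \<otimes> g x) = x" by (simp add: g_h g_in h_g)
    show "\<exists>y\<in>U. h (g y \<otimes> g x) = h \<one>"
      using \<open>x \<in> U\<close> by (intro bexI[of _ "h (inv (g x))"]) (simp_all add: g_h g_in h_in)
  qed (simp_all add: h_in g_in)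
qed

lemma boolean_group_on_card_power_of_two:
  assumes "finite U" "card U = 2 ^ m" "z \<in> U"
  obtains f where "comm_group \<lparr>carrier = U, mult = f, one = z\<rparr>"
    "\<forall>X\<in>U. f X X = z"
proof -
  obtain g0 where g0: "bij_betw g0 U (Pow {..<m})"
    using assms finite_same_card_bij[of U "Pow {..<m}"] by (auto simp: card_Pow)
  define g where "g = (\<lambda>X. sym_diff (g0 X) (g0 z))"
  have "bij_betw (\<lambda>X. sym_diff X (g0 z)) (Pow {..<m}) (Pow {..<m})"
    using g0 assms(3) by (intro bij_betw_sym_diff_Pow) (auto dest: bij_betwE)
  from bij_betw_trans[OF g0 this] have g: "bij_betw g U (Pow {..<m})"
    by (simp add: g_def comp_def)
  have "g z = {}" by (simp add: g_def)
  then have one: "inv_into U g {} = z"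
    using g assms(3) by (metis bij_betw_inv_into_left)
  define f where "f = (\<lambda>X Y. inv_into U g (sym_diff (g X) (g Y)))"
  have "comm_group \<lparr>carrier = U, mult = f, one = z\<rparr>"
    using comm_group_transfer[OF comm_group_Pow_sym_diff, of g U] g one
    by (simp add: f_def)
  moreover have "\<forall>X\<in>U. f X X = z" by (simp add: f_def one)
  ultimately show thesis using that by blast
qed

lemma linear_code_if_equidistant:
  assumes "U \<subseteq> Psub" "{0} \<in> U" "finite U" "card U = 2 ^ m" "equidistant r U"
  shows "linear_code U"
proof -
  obtain f where grp: "comm_group \<lparr>carrier = U, mult = f, one = {0}\<rparr>"
    and self_inverse: "\<forall>X\<in>U. f X X = {0}"
    by (rule boolean_group_on_card_power_of_two[OF assms(3,4,2)])
  interpret comm_group "\<lparr>carrier = U, mult = f, one = {0}\<rparr>" by (fact grp)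
  have closed: "\<forall>X\<in>U. \<forall>Y\<in>U. f X Y \<in> U" using m_closed by fastforce
  have "dS (f Y1 X) (f Y2 X) = dS Y1 Y2" if "Y1 \<in> U" "Y2 \<in> U" "X \<in> U" for Y1 Y2 X
  proof (cases "Y1 = Y2")
    case False
    then have "f Y1 X \<noteq> f Y2 X" using right_cancel[of X Y1 Y2] that by simp
    then show ?thesis using assms(5) closed False that by (simp add: equidistant_def)
  qed (simp add: dS_self)
  then show ?thesis unfolding linear_code_def using assms(1,2) closed grp self_inverse by blast
qed

theorem theorem10:
  fixes d m :: nat
  assumes "d > 0" and "m > 0"
  shows "(\<exists>U :: ('a::{field,finite} ^ 'n) set set.
            linear_code U \<and> equidistant (2 * d) U \<and> card U = 2 ^ m)
     \<longleftrightarrow> (\<exists>F :: ('a ^ 'n) set set.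
            F \<subseteq> Gsub (2 * d) \<and> intersecting d F \<and> card F = 2 ^ m - 1)"
proof
  assume "\<exists>U :: ('a ^ 'n) set set. linear_code U \<and> equidistant (2 * d) U \<and> card U = 2 ^ m"
  then obtain U :: "('a ^ 'n) set set"
    where U: "linear_code U" "equidistant (2 * d) U" "card U = 2 ^ m" by blast
  then have "U - {{0}} \<subseteq> Psub" "{0} \<in> U" by (auto simp: linear_code_def)
  then have "U - {{0}} \<subseteq> Gsub (2 * d) \<and> intersecting d (U - {{0}})"
    using U(2) equidistant_insert_zero_iff[of "U - {{0}}" d] by (simp add: insert_absorb)
  moreover have "card (U - {{0}}) = 2 ^ m - 1" using U(3) \<open>{0} \<in> U\<close> by simp
  ultimately show "\<exists>F :: ('a ^ 'n) set set.
    F \<subseteq> Gsub (2 * d) \<and> intersecting d F \<and> card F = 2 ^ m - 1" by blast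
next
  assume "\<exists>F :: ('a ^ 'n) set set. F \<subseteq> Gsub (2 * d) \<and> intersecting d F \<and> card F = 2 ^ m - 1"
  then obtain F :: "('a ^ 'n) set set"
    where F: "F \<subseteq> Gsub (2 * d)" "intersecting d F" "card F = 2 ^ m - 1" by blast
  have "{0} \<notin> F" using F(1) \<open>d > 0\<close> by (force simp: Gsub_def)
  have "F \<subseteq> Psub" using F(1) by (auto simp: Gsub_def Psub_def)
  then have "equidistant (2 * d) (insert {0} F)"
    using F equidistant_insert_zero_iff \<open>{0} \<notin> F\<close> by blast
  moreover have "card (insert {0} F) = 2 ^ m" using F(3) \<open>{0} \<notin> F\<close> by simp
  moreover have "insert {0} F \<subseteq> Psub"
    using \<open>F \<subseteq> Psub\<close> vec.subspace_single_0 by (auto simp: Psub_def)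
  ultimately show "\<exists>U :: ('a ^ 'n) set set.
    linear_code U \<and> equidistant (2 * d) U \<and> card U = 2 ^ m"
    using linear_code_if_equidistant[OF _ insertI1 finite] by blast
qed

end
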